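(* Let $m,n,p,q\in\mathbb{R}$ with $m<0$. Set $u=\frac{2\sqrt{-m}}{\sqrt5}$, $\alpha=\frac{16n}{u^3}$, $\beta=\frac{16p}{u^4}-5$, $\gamma=\frac{16q}{u^5}$, and $f(\theta)=\alpha\cos^2\theta+\beta\cos\theta+\cos 5\theta+\gamma$. Then $f$ has at most four critical points in the open interval $(0,\pi)$, and consequently $f$ has at most five zeros in $[0,\pi]$. *)

theory Defs
  imports Complex_Main
begin

end

theory Submission
  imports Defs "HOL-Computational_Algebra.Polynomial"
begin

text \<open>Since \<open>cos 5\<theta> = T\<^sub>5(cos \<theta>)\<close> with the Chebyshev polynomial \<open>T\<^sub>5\<close>, the function \<open>f\<close> is
  \<open>P(cos \<theta>)\<close> for a real polynomial \<open>P\<close> of degree 5. As \<open>cos\<close> is injective on \<open>[0, \<pi>]\<close>, distinct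
  zeros of \<open>f\<close> there give distinct roots of \<open>P\<close>. Moreover \<open>f'(\<theta>) = -sin \<theta> \<cdot> P'(cos \<theta>)\<close> and
  \<open>sin \<theta> > 0\<close> on \<open>(0, \<pi>)\<close>, so critical points of \<open>f\<close> there give distinct roots of the quartic \<open>P'\<close>.\<close>

lemma cos_quintuple_cos: "cos (5 * x :: real) = 16 * cos x ^ 5 - 20 * cos x ^ 3 + 5 * cos x"
proof -
  have "cos (5 * x) + cos x = cos (3 * x + 2 * x) + cos (3 * x - 2 * x)"
    by simp
  also have "\<dots> = 2 * cos (3 * x) * cos (2 * x)"
    by (simp only: cos_add cos_diff)
  also have "\<dots> = 2 * (4 * cos x ^ 3 - 3 * cos x) * (2 * cos x ^ 2 - 1)"
    by (simp only: cos_treble_cos cos_double_cos)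
  finally show ?thesis
    by (simp add: algebra_simps eval_nat_numeral)
qed

lemma finite_card_le_degree_roots_cos:
  fixes P :: "real poly"
  assumes "P \<noteq> 0" and S: "S \<subseteq> {\<theta> \<in> {0..pi}. poly P (cos \<theta>) = 0}"
  shows "finite S \<and> card S \<le> degree P"
proof -
  have inj: "inj_on cos S"
    using S cos_inj_pi by (intro inj_onI) auto
  have roots: "cos ` S \<subseteq> {x. poly P x = 0}"
    using S by auto
  have "finite (cos ` S)"
    using roots poly_roots_finite[OF \<open>P \<noteq> 0\<close>] finite_subset by blast
  then have "finite S"
    using inj finite_imageD by blast
  moreover have "card S \<le> degree P"
  proof -
    have "card S = card (cos ` S)"
      using inj by (simp add: card_image)
    also have "\<dots> \<le> card {x. poly P x = 0}"
      using roots poly_roots_finite[OF \<open>P \<noteq> 0\<close>] by (rule card_mono[rotated])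
    also have "\<dots> \<le> degree P"
      using \<open>P \<noteq> 0\<close> by (rule card_poly_roots_bound)
    finally show ?thesis .
  qed
  ultimately show ?thesis ..
qed

lemma has_real_derivative_poly_cos:
  "((\<lambda>\<theta>. poly P (cos \<theta>)) has_real_derivative - sin \<theta> * poly (pderiv P) (cos \<theta>)) (at \<theta>)"
  using DERIV_chain2[OF poly_DERIV DERIV_cos] by (simp add: mult.commute)

lemma critical_point_poly_cos_imp_root_pderiv:
  assumes "\<theta> \<in> {0<..<pi}" and "((\<lambda>\<theta>. poly P (cos \<theta>)) has_real_derivative 0) (at \<theta>)"
  shows "poly (pderiv P) (cos \<theta>) = 0"
proof -
  have "- sin \<theta> * poly (pderiv P) (cos \<theta>) = 0"
    using DERIV_unique[OF has_real_derivative_poly_cos assms(2)] .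
  moreover have "sin \<theta> > 0"
    using assms(1) by (simp add: sin_gt_zero)
  ultimately show ?thesis
    by simp
qed

lemma finite_card_critical_points_poly_cos:
  fixes P :: "real poly"
  assumes "degree P \<noteq> 0"
  defines "C \<equiv> {\<theta> \<in> {0<..<pi}. ((\<lambda>\<theta>. poly P (cos \<theta>)) has_real_derivative 0) (at \<theta>)}"
  shows "finite C \<and> card C \<le> degree P - 1"
proof -
  have "pderiv P \<noteq> 0"
    using assms(1) by (simp add: pderiv_eq_0_iff)
  moreover have "C \<subseteq> {\<theta> \<in> {0..pi}. poly (pderiv P) (cos \<theta>) = 0}"
    unfolding C_def using critical_point_poly_cos_imp_root_pderiv by fastforce
  ultimately show ?thesis
    using finite_card_le_degree_roots_cos[of "pderiv P" C] by (simp add: degree_pderiv)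
qed

theorem proposition3:
  fixes m n p q :: real and u \<alpha> \<beta> \<gamma> :: real and f :: "real \<Rightarrow> real"
  assumes "m < 0"
  defines "u \<equiv> 2 * sqrt (- m) / sqrt 5"
  defines "\<alpha> \<equiv> 16 * n / u ^ 3"
  defines "\<beta> \<equiv> 16 * p / u ^ 4 - 5"
  defines "\<gamma> \<equiv> 16 * q / u ^ 5"
  defines "f \<equiv> (\<lambda>\<theta>. \<alpha> * (cos \<theta>)\<^sup>2 + \<beta> * cos \<theta> + cos (5 * \<theta>) + \<gamma>)"
  shows "finite {\<theta> \<in> {0<..<pi}. (f has_real_derivative 0) (at \<theta>)}
         \<and> card {\<theta> \<in> {0<..<pi}. (f has_real_derivative 0) (at \<theta>)} \<le> 4
         \<and> finite {\<theta> \<in> {0..pi}. f \<theta> = 0}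
         \<and> card {\<theta> \<in> {0..pi}. f \<theta> = 0} \<le> 5"
proof -
  define P :: "real poly" where "P = [:\<gamma>, 5 + \<beta>, \<alpha>, -20, 0, 16:]"
  have degree_P: "degree P = 5"
    unfolding P_def by simp
  have f_eq: "f = (\<lambda>\<theta>. poly P (cos \<theta>))"
    unfolding f_def P_def cos_quintuple_cos
    by (simp add: algebra_simps power2_eq_square eval_nat_numeral)
  have "P \<noteq> 0"
    using degree_P by auto
  then have "finite {\<theta> \<in> {0..pi}. f \<theta> = 0} \<and> card {\<theta> \<in> {0..pi}. f \<theta> = 0} \<le> 5"
    using finite_card_le_degree_roots_cos[of P] degree_P by (simp add: f_eq)
  moreover have "finite {\<theta> \<in> {0<..<pi}. (f has_real_derivative 0) (at \<theta>)}
      \<and> card {\<theta> \<in> {0<..<pi}. (f has_real_derivative 0) (at \<theta>)} \<le> 4"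
    using finite_card_critical_points_poly_cos[of P] degree_P by (simp add: f_eq)
  ultimately show ?thesis
    by blast
qed

end
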